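(* Assume (A3) and (A5). If $\gamma_0\le1$, then for each $\gamma<\gamma_0$ there is a nice constant $\kappa$ depending on $\gamma$ with $\|\mathbf E_N\|\le\kappa/L^{\gamma}$. If $\gamma_0>1$, there is a nice constant $\kappa$ with $\|\mathbf E_N\|\le\kappa/L$.
   Context: For $m\ge1$, $\mathcal S_m$ is a spectral density on $[0,1]$ with covariances $r_m(k)=\int_0^1\mathcal S_m(\nu)e^{2i\pi\nu k}d\nu$. (A3): $\sup_m\max_\nu\mathcal S_m<\infty$, $\inf_m\min_\nu\mathcal S_m>0$. (A5): for some $\gamma_0>0$, $\sup_m\sum_n(1+|n|)^{\gamma_0}|r_m(n)|<\infty$. $M=M(N)$, $L=L(N)$ are integers. $\mathcal R_{m,L}$ is the $L\times L$ Toeplitz matrix with entries $r_m(k-k')$, $\mathbf d_R(\nu)=(1,e^{2i\pi\nu},\dots,e^{2i\pi(R-1)\nu})^T$, $\mathbf a_L=L^{-1/2}\mathbf d_L$, $\epsilon_{m,L}(\nu)=\mathcal S_m(\nu)\mathbf a_L^H(\nu)\mathcal R_{m,L}^{-1}\mathbf a_L(\nu)-1$, and $\mathbf E_N=\int_0^1\big(\frac1M\sum_{m=1}^M\epsilon_{m,L}(\nu)\big)\mathbf d_N(\nu)\mathbf d_N^H(\nu)d\nu$ ($N\times N$). A nice constant is independent of $L,M,N$. *)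

theory Defs
  imports "HOL-Analysis.Analysis" "Jordan_Normal_Form.Matrix"
begin

definition cov :: "(nat \<Rightarrow> real \<Rightarrow> real) \<Rightarrow> nat \<Rightarrow> int \<Rightarrow> complex" where
  "cov S m k = integral {0..1} (\<lambda>\<nu>. complex_of_real (S m \<nu>) * exp (2 * of_real pi * \<i> * of_real \<nu> * of_int k))"

definition toep :: "(nat \<Rightarrow> real \<Rightarrow> real) \<Rightarrow> nat \<Rightarrow> nat \<Rightarrow> complex mat" where
  "toep S m L = mat L L (\<lambda>(i, j). cov S m (int i - int j))"

definition mat_inv :: "complex mat \<Rightarrow> complex mat" where
  "mat_inv A = (THE B. B \<in> carrier_mat (dim_row A) (dim_row A) \<and>
                       A * B = 1\<^sub>m (dim_row A) \<and> B * A = 1\<^sub>m (dim_row A))"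

definition dvec :: "nat \<Rightarrow> real \<Rightarrow> complex vec" where
  "dvec R \<nu> = vec R (\<lambda>k. exp (2 * of_real pi * \<i> * of_real \<nu> * of_nat k))"

definition avec :: "nat \<Rightarrow> real \<Rightarrow> complex vec" where
  "avec L \<nu> = (complex_of_real (1 / sqrt (real L))) \<cdot>\<^sub>v dvec L \<nu>"

definition epsML :: "(nat \<Rightarrow> real \<Rightarrow> real) \<Rightarrow> nat \<Rightarrow> nat \<Rightarrow> real \<Rightarrow> complex" where
  "epsML S m L \<nu> =
     complex_of_real (S m \<nu>) *
       (\<Sum>i<L. cnj (avec L \<nu> $ i) * ((mat_inv (toep S m L) *\<^sub>v avec L \<nu>) $ i)) - 1"

definition EN :: "(nat \<Rightarrow> real \<Rightarrow> real) \<Rightarrow> nat \<Rightarrow> nat \<Rightarrow> nat \<Rightarrow> complex mat" where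
  "EN S M L N = mat N N (\<lambda>(j, k). integral {0..1} (\<lambda>\<nu>.
      ((1 / of_nat M) * (\<Sum>m=1..M. epsML S m L \<nu>)) * (dvec N \<nu> $ j) * cnj (dvec N \<nu> $ k)))"

definition vnorm :: "complex vec \<Rightarrow> real" where
  "vnorm v = sqrt (\<Sum>i<dim_vec v. (cmod (v $ i))\<^sup>2)"

definition op_norm :: "complex mat \<Rightarrow> real" where
  "op_norm A = Sup {vnorm (A *\<^sub>v v) | v. v \<in> carrier_vec (dim_col A) \<and> vnorm v \<le> 1}"

end

theory Submission
  imports Defs "Jordan_Normal_Form.Determinant"
begin

text \<open>
  By (A5) the covariances r_m are absolutely summable, so g_m(nu) = sum_l r_m(l) exp(-2 i pi nu l)
  is continuous and has the same Fourier coefficients as S_m. Hence E_N is the Toeplitz matrix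
  of the continuous symbol F = (1/M) sum_m (g_m a^H R_m^-1 a - 1), and by Bessel's inequality and
  Parseval's identity its spectral norm is at most sup |F|.

  Pointwise, put b = g a - R a; then conj(g) (g a^H R^-1 a - 1) = a^H b + b^H R^-1 b.
  The entry b_i is at most L^(-1/2) times the mass of r outside the offsets i - j of row i. An
  offset l is missing from at most min(|l|, L) <= |l|^s L^(1-s) rows, so by (A5) these tails add
  up to O(L^(1-s)) with s = min(gamma0, 1), which makes |a^H b| and |b|^2 of order L^-s.
  Finally S_m >= c gives Re (x^H R x) >= c |x|^2; this bounds b^H R^-1 b by |b|^2 / c and,
  letting L tend to infinity, gives |g| >= c.
\<close>

section \<open>Fourier coefficients on the unit interval\<close>

definition fourier_char :: "real \<Rightarrow> int \<Rightarrow> complex" where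
  "fourier_char \<nu> k = exp (2 * of_real pi * \<i> * of_real \<nu> * of_int k)"

lemma fourier_char_mult: "fourier_char \<nu> a * fourier_char \<nu> b = fourier_char \<nu> (a + b)"
  unfolding fourier_char_def by (simp add: exp_add[symmetric] algebra_simps)

lemma cnj_fourier_char: "cnj (fourier_char \<nu> k) = fourier_char \<nu> (- k)"
  unfolding fourier_char_def by (simp add: exp_cnj)

lemma fourier_char_0 [simp]: "fourier_char \<nu> 0 = 1"
  unfolding fourier_char_def by simp

lemma norm_fourier_char [simp]: "cmod (fourier_char \<nu> k) = 1"
proof -
  have "fourier_char \<nu> k = exp (\<i> * complex_of_real (2 * pi * \<nu> * of_int k))"
    unfolding fourier_char_def by (simp add: algebra_simps)
  then show ?thesis by (simp only: norm_exp_i_times)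
qed

lemma continuous_on_fourier_char [continuous_intros]: "continuous_on A (\<lambda>\<nu>. fourier_char \<nu> k)"
  unfolding fourier_char_def by (intro continuous_intros)

lemma has_integral_fourier_char:
  "((\<lambda>\<nu>. fourier_char \<nu> k) has_integral (if k = 0 then 1 else 0)) {0..1}"
proof (cases "k = 0")
  case True
  then show ?thesis using has_integral_const_real[of "1::complex" 0 1] by simp
next
  case False
  define c where "c = 2 * of_real pi * \<i> * of_int k"
  have "c \<noteq> 0" using False by (simp add: c_def)
  have char_eq: "fourier_char \<nu> k = exp (c * of_real \<nu>)" for \<nu>
    unfolding fourier_char_def c_def by (simp add: algebra_simps)
  have "((\<lambda>\<nu>. exp (c * of_real \<nu>) / c) has_vector_derivative fourier_char x k) (at x within {0..1})"
    for x
  proof -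
    have "((\<lambda>z. exp (c * z) / c) has_field_derivative (exp (c * of_real x) * c) / c) (at (of_real x))"
      by (auto intro!: derivative_eq_intros)
    from has_vector_derivative_real_field[OF this] show ?thesis
      using \<open>c \<noteq> 0\<close> char_eq[of x] by simp
  qed
  then have "((\<lambda>\<nu>. fourier_char \<nu> k) has_integral (exp (c * of_real 1) / c - exp (c * of_real 0) / c)) {0..1}"
    by (intro fundamental_theorem_of_calculus) auto
  moreover have "exp (c * of_real 1) = 1"
    using exp_integer_2pi[of "of_int k"] unfolding c_def by (simp add: algebra_simps)
  ultimately show ?thesis using False by simp
qed

text \<open>Coefficients follow the sign convention of \<^const>\<open>cov\<close>: \<open>\<phi> \<nu> = (\<Sum>l. r l * exp (- 2 \<pi> \<i> \<nu> l))\<close>.\<close>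

definition has_fourier_coeffs :: "(real \<Rightarrow> complex) \<Rightarrow> (int \<Rightarrow> complex) \<Rightarrow> bool" where
  "has_fourier_coeffs \<phi> r \<longleftrightarrow> (\<forall>k. ((\<lambda>\<nu>. \<phi> \<nu> * fourier_char \<nu> k) has_integral r k) {0..1})"

lemma has_fourier_coeffs_const_1: "has_fourier_coeffs (\<lambda>_. 1) (\<lambda>k. if k = 0 then 1 else 0)"
  unfolding has_fourier_coeffs_def using has_integral_fourier_char by simp

lemma has_fourier_coeffs_cmult:
  "has_fourier_coeffs \<phi> r \<Longrightarrow> has_fourier_coeffs (\<lambda>\<nu>. a * \<phi> \<nu>) (\<lambda>k. a * r k)"
  unfolding has_fourier_coeffs_def by (simp add: mult.assoc has_integral_mult_right)

lemma has_fourier_coeffs_sum: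
  assumes "finite A" and "\<And>m. m \<in> A \<Longrightarrow> has_fourier_coeffs (\<phi> m) (r m)"
  shows "has_fourier_coeffs (\<lambda>\<nu>. \<Sum>m\<in>A. \<phi> m \<nu>) (\<lambda>k. \<Sum>m\<in>A. r m k)"
  using assms unfolding has_fourier_coeffs_def by (simp add: sum_distrib_right has_integral_sum)

lemma has_fourier_coeffs_of_real_nonneg:
  fixes s :: "real \<Rightarrow> real"
  assumes s: "s integrable_on {0..1}" and nonneg: "\<And>\<nu>. \<nu> \<in> {0..1} \<Longrightarrow> 0 \<le> s \<nu>"
  shows "has_fourier_coeffs (\<lambda>\<nu>. of_real (s \<nu>))
           (\<lambda>k. integral {0..1} (\<lambda>\<nu>. of_real (s \<nu>) * fourier_char \<nu> k))"
  unfolding has_fourier_coeffs_def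
proof
  fix k
  have s_abs: "(complex_of_real \<circ> s) absolutely_integrable_on {0..1}"
    by (intro absolutely_integrable_linear bounded_linear_of_real
        nonnegative_absolutely_integrable_1 s nonneg)
  have char_meas: "(\<lambda>\<nu>. fourier_char \<nu> k) \<in> borel_measurable (lebesgue_on {0..1})"
    by (intro continuous_imp_measurable_on_sets_lebesgue continuous_intros) auto
  have char_bdd: "bounded ((\<lambda>\<nu>. fourier_char \<nu> k) ` {0..1})"
    by (intro compact_imp_bounded compact_continuous_image continuous_intros) auto
  have "(\<lambda>\<nu>. fourier_char \<nu> k * (complex_of_real \<circ> s) \<nu>) absolutely_integrable_on {0..1}"
    by (rule absolutely_integrable_bounded_measurable_product[OF bilinear_times char_meas _ char_bdd s_abs])
      auto
  then have "(\<lambda>\<nu>. of_real (s \<nu>) * fourier_char \<nu> k) integrable_on {0..1}"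
    by (simp add: absolutely_integrable_on_def mult.commute)
  then show "((\<lambda>\<nu>. of_real (s \<nu>) * fourier_char \<nu> k) has_integral
      integral {0..1} (\<lambda>\<nu>. of_real (s \<nu>) * fourier_char \<nu> k)) {0..1}"
    by (rule integrable_integral)
qed

lemma has_integral_mult_trig_sum:
  assumes "has_fourier_coeffs \<phi> r" and "finite A"
  shows "((\<lambda>\<nu>. \<phi> \<nu> * (\<Sum>x\<in>A. w x * fourier_char \<nu> (k x))) has_integral (\<Sum>x\<in>A. w x * r (k x))) {0..1}"
proof -
  have "((\<lambda>\<nu>. \<Sum>x\<in>A. \<phi> \<nu> * fourier_char \<nu> (k x) * w x) has_integral (\<Sum>x\<in>A. r (k x) * w x)) {0..1}"
    using assms unfolding has_fourier_coeffs_def by (intro has_integral_sum has_integral_mult_left) auto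
  then show ?thesis by (simp add: sum_distrib_left algebra_simps)
qed

section \<open>Fourier series with absolutely summable coefficients\<close>

definition fourier_series :: "(int \<Rightarrow> complex) \<Rightarrow> real \<Rightarrow> complex" where
  "fourier_series r \<nu> = (\<Sum>\<^sub>\<infinity>l. r l * fourier_char \<nu> (- l))"

lemma norm_fourier_series_minus_partial_le:
  assumes r: "(\<lambda>l. cmod (r l)) summable_on UNIV" and "finite W"
  shows "cmod (fourier_series r \<nu> * fourier_char \<nu> p - (\<Sum>l\<in>W. r l * fourier_char \<nu> (p - l)))
           \<le> (\<Sum>\<^sub>\<infinity>l\<in>UNIV - W. cmod (r l))"
proof -
  define t where "t l = r l * fourier_char \<nu> (p - l)" for l
  have norm_t: "norm (t l) = cmod (r l)" for l by (simp add: t_def norm_mult)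
  have abs_t: "(\<lambda>l. norm (t l)) summable_on A" for A
    using summable_on_subset_banach[OF r, of A] by (simp add: norm_t)
  have t: "t summable_on A" for A by (rule abs_summable_summable[OF abs_t])
  have "fourier_series r \<nu> * fourier_char \<nu> p = (\<Sum>\<^sub>\<infinity>l. r l * fourier_char \<nu> (- l) * fourier_char \<nu> p)"
    unfolding fourier_series_def by (rule infsum_cmult_left'[symmetric])
  also have "\<dots> = (\<Sum>\<^sub>\<infinity>l. t l)"
    unfolding t_def by (simp add: mult.assoc fourier_char_mult)
  also have "\<dots> = (\<Sum>\<^sub>\<infinity>l\<in>UNIV - W. t l) + (\<Sum>l\<in>W. t l)"
    using infsum_Diff[OF t t, of W UNIV] \<open>finite W\<close> by simp
  finally have "cmod (fourier_series r \<nu> * fourier_char \<nu> p - (\<Sum>l\<in>W. t l)) = norm (\<Sum>\<^sub>\<infinity>l\<in>UNIV - W. t l)"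
    by simp
  also have "\<dots> \<le> (\<Sum>\<^sub>\<infinity>l\<in>UNIV - W. cmod (r l))"
    using norm_infsum_bound[OF abs_t] by (simp add: norm_t)
  finally show ?thesis by (simp add: t_def)
qed

lemma uniform_limit_fourier_series:
  assumes r: "(\<lambda>l. cmod (r l)) summable_on UNIV"
  shows "uniform_limit {0..1} (\<lambda>F \<nu>. \<Sum>l\<in>F. r l * fourier_char \<nu> (p - l))
           (\<lambda>\<nu>. fourier_series r \<nu> * fourier_char \<nu> p) (finite_subsets_at_top UNIV)"
  unfolding uniform_limit_iff
proof (intro allI impI)
  fix e :: real assume "e > 0"
  define T where "T = (\<Sum>\<^sub>\<infinity>l. cmod (r l))"
  have abs_r: "(\<lambda>l. cmod (r l)) summable_on A" for A
    using summable_on_subset_banach[OF r] by auto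
  have "((\<lambda>l. cmod (r l)) has_sum T) UNIV"
    using r unfolding T_def by (rule has_sum_infsum)
  then have "((\<lambda>F. \<Sum>l\<in>F. cmod (r l)) \<longlongrightarrow> T) (finite_subsets_at_top UNIV)"
    by (simp add: has_sum_def)
  from tendstoD[OF this \<open>e > 0\<close>]
  have "\<forall>\<^sub>F F in finite_subsets_at_top UNIV. dist (\<Sum>l\<in>F. cmod (r l)) T < e \<and> finite F"
    by (rule eventually_conj[OF _ eventually_finite_subsets_at_top_weakI]) simp
  then show "\<forall>\<^sub>F F in finite_subsets_at_top UNIV. \<forall>\<nu>\<in>{0..1}.
      dist (\<Sum>l\<in>F. r l * fourier_char \<nu> (p - l)) (fourier_series r \<nu> * fourier_char \<nu> p) < e"
  proof (rule eventually_mono, intro ballI)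
    fix F \<nu> assume F: "dist (\<Sum>l\<in>F. cmod (r l)) T < e \<and> finite F"
    have "dist (\<Sum>l\<in>F. r l * fourier_char \<nu> (p - l)) (fourier_series r \<nu> * fourier_char \<nu> p)
        \<le> (\<Sum>\<^sub>\<infinity>l\<in>UNIV - F. cmod (r l))"
      using norm_fourier_series_minus_partial_le[OF r, of F] F by (simp add: dist_norm norm_minus_commute)
    also have "\<dots> = T - (\<Sum>l\<in>F. cmod (r l))"
      using infsum_Diff[OF abs_r abs_r, of F UNIV] F by (simp add: T_def)
    finally show "dist (\<Sum>l\<in>F. r l * fourier_char \<nu> (p - l)) (fourier_series r \<nu> * fourier_char \<nu> p) < e"
      using F by (simp add: dist_real_def abs_less_iff)
  qed
qed

lemma continuous_on_fourier_series:
  assumes "(\<lambda>l. cmod (r l)) summable_on UNIV"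
  shows "continuous_on {0..1} (fourier_series r)"
proof -
  have "continuous_on {0..1} (\<lambda>\<nu>. fourier_series r \<nu> * fourier_char \<nu> 0)"
    by (rule uniform_limit_theorem[OF _ uniform_limit_fourier_series[OF assms]])
       (auto intro!: always_eventually continuous_intros)
  then show ?thesis by simp
qed

lemma has_fourier_coeffs_fourier_series:
  assumes r: "(\<lambda>l. cmod (r l)) summable_on UNIV"
  shows "has_fourier_coeffs (fourier_series r) r"
  unfolding has_fourier_coeffs_def
proof
  fix p
  obtain I J where I: "\<And>F. ((\<lambda>\<nu>. \<Sum>l\<in>F. r l * fourier_char \<nu> (p - l)) has_integral I F) {0..1}"
    and J: "((\<lambda>\<nu>. fourier_series r \<nu> * fourier_char \<nu> p) has_integral J) {0..1}"
    and lim: "(I \<longlongrightarrow> J) (finite_subsets_at_top UNIV)"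
    by (rule uniform_limit_integral[OF uniform_limit_fourier_series[OF r]])
       (auto intro!: continuous_intros continuous_on_sum)
  have "I F = r p" if F: "finite F" "p \<in> F" for F
  proof -
    have "((\<lambda>\<nu>. 1 * (\<Sum>l\<in>F. r l * fourier_char \<nu> (p - l))) has_integral
        (\<Sum>l\<in>F. r l * (if p - l = 0 then 1 else 0))) {0..1}"
      by (rule has_integral_mult_trig_sum[OF has_fourier_coeffs_const_1 \<open>finite F\<close>])
    moreover have "(\<Sum>l\<in>F. r l * (if p - l = 0 then 1 else 0)) = r p"
      using F by (subst sum.cong[OF refl, of _ _ "\<lambda>l. if l = p then r l else 0"]) auto
    ultimately have "((\<lambda>\<nu>. \<Sum>l\<in>F. r l * fourier_char \<nu> (p - l)) has_integral r p) {0..1}"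
      by simp
    with I[of F] show ?thesis by (rule has_integral_unique)
  qed
  then have "\<forall>\<^sub>F F in finite_subsets_at_top UNIV. I F = r p"
    unfolding eventually_finite_subsets_at_top by (intro exI[of _ "{p}"]) blast
  then have "(I \<longlongrightarrow> r p) (finite_subsets_at_top UNIV)"
    by (rule tendsto_eventually)
  with lim have "J = r p"
    using tendsto_unique[OF finite_subsets_at_top_neq_bot] by blast
  with J show "((\<lambda>\<nu>. fourier_series r \<nu> * fourier_char \<nu> p) has_integral r p) {0..1}"
    by simp
qed

section \<open>Toeplitz forms and the spectral norm of Toeplitz matrices\<close>

definition trig_poly :: "(nat \<Rightarrow> complex) \<Rightarrow> nat \<Rightarrow> real \<Rightarrow> complex" where
  "trig_poly x n \<nu> = (\<Sum>j<n. x j * fourier_char \<nu> (- int j))"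

lemma continuous_on_trig_poly [continuous_intros]: "continuous_on A (trig_poly x n)"
  unfolding trig_poly_def by (intro continuous_intros)

lemma norm_trig_poly_sq:
  "of_real ((cmod (trig_poly x n \<nu>))\<^sup>2) =
     (\<Sum>ij\<in>{..<n}\<times>{..<n}. (cnj (x (fst ij)) * x (snd ij)) * fourier_char \<nu> (int (fst ij) - int (snd ij)))"
proof -
  have "of_real ((cmod (trig_poly x n \<nu>))\<^sup>2) = trig_poly x n \<nu> * cnj (trig_poly x n \<nu>)"
    by (rule complex_norm_square)
  also have "\<dots> = (\<Sum>i<n. \<Sum>j<n. (cnj (x i) * x j) * (fourier_char \<nu> (int i) * fourier_char \<nu> (- int j)))"
    unfolding trig_poly_def
    by (simp add: sum_distrib_left sum_distrib_right cnj_fourier_char algebra_simps)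
  also have "\<dots> = (\<Sum>i<n. \<Sum>j<n. (cnj (x i) * x j) * fourier_char \<nu> (int i - int j))"
    by (simp add: fourier_char_mult)
  finally show ?thesis by (simp add: sum.cartesian_product case_prod_beta)
qed

lemma has_integral_toeplitz_form:
  assumes "has_fourier_coeffs \<phi> r"
  shows "((\<lambda>\<nu>. \<phi> \<nu> * of_real ((cmod (trig_poly x n \<nu>))\<^sup>2)) has_integral
           (\<Sum>i<n. cnj (x i) * (\<Sum>j<n. r (int i - int j) * x j))) {0..1}"
proof -
  have "((\<lambda>\<nu>. \<phi> \<nu> * of_real ((cmod (trig_poly x n \<nu>))\<^sup>2)) has_integral
      (\<Sum>ij\<in>{..<n}\<times>{..<n}. (cnj (x (fst ij)) * x (snd ij)) * r (int (fst ij) - int (snd ij)))) {0..1}"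
    unfolding norm_trig_poly_sq by (rule has_integral_mult_trig_sum[OF assms]) auto
  then show ?thesis
    by (simp add: sum.cartesian_product sum_distrib_left algebra_simps case_prod_beta)
qed

lemma has_integral_norm_trig_poly_sq:
  "((\<lambda>\<nu>. (cmod (trig_poly x n \<nu>))\<^sup>2) has_integral (\<Sum>i<n. (cmod (x i))\<^sup>2)) {0..1}"
proof -
  have "(\<Sum>j<n. (if int i - int j = 0 then 1 else 0) * x j) = x i" if "i < n" for i
    using that by (subst sum.cong[OF refl, of _ _ "\<lambda>j. if j = i then x j else 0"]) auto
  then have "(\<Sum>i<n. cnj (x i) * (\<Sum>j<n. (if int i - int j = 0 then 1 else 0) * x j)) =
      (\<Sum>i<n. cnj (x i) * x i)"
    by (intro sum.cong) auto
  also have "\<dots> = of_real (\<Sum>i<n. (cmod (x i))\<^sup>2)"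
    unfolding of_real_sum complex_norm_square by (simp only: mult.commute)
  finally have "(\<Sum>i<n. cnj (x i) * (\<Sum>j<n. (if int i - int j = 0 then 1 else 0) * x j)) =
      of_real (\<Sum>i<n. (cmod (x i))\<^sup>2)" .
  with has_integral_toeplitz_form[OF has_fourier_coeffs_const_1, of x n]
  have "((\<lambda>\<nu>. complex_of_real ((cmod (trig_poly x n \<nu>))\<^sup>2)) has_integral
      complex_of_real (\<Sum>i<n. (cmod (x i))\<^sup>2)) {0..1}" by simp
  from has_integral_linear[OF this bounded_linear_Re] show ?thesis by (simp add: o_def)
qed

lemma toeplitz_form_ge:
  fixes s :: "real \<Rightarrow> real"
  assumes "has_fourier_coeffs (\<lambda>\<nu>. of_real (s \<nu>)) r" and "\<And>\<nu>. \<nu> \<in> {0..1} \<Longrightarrow> c \<le> s \<nu>"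
  shows "c * (\<Sum>i<n. (cmod (x i))\<^sup>2) \<le> Re (\<Sum>i<n. cnj (x i) * (\<Sum>j<n. r (int i - int j) * x j))"
proof -
  have Re_eq: "Re \<circ> (\<lambda>\<nu>. of_real (s \<nu>) * of_real ((cmod (trig_poly x n \<nu>))\<^sup>2)) =
      (\<lambda>\<nu>. s \<nu> * (cmod (trig_poly x n \<nu>))\<^sup>2)"
    by (simp add: o_def flip: of_real_mult)
  have s_form: "((\<lambda>\<nu>. s \<nu> * (cmod (trig_poly x n \<nu>))\<^sup>2) has_integral
      Re (\<Sum>i<n. cnj (x i) * (\<Sum>j<n. r (int i - int j) * x j))) {0..1}"
    using has_integral_linear[OF has_integral_toeplitz_form[OF assms(1), of x n] bounded_linear_Re]
    unfolding Re_eq .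
  have c_form: "((\<lambda>\<nu>. c * (cmod (trig_poly x n \<nu>))\<^sup>2) has_integral c * (\<Sum>i<n. (cmod (x i))\<^sup>2)) {0..1}"
    by (rule has_integral_mult_right[OF has_integral_norm_trig_poly_sq])
  show ?thesis
    by (rule has_integral_le[OF c_form s_form]) (auto intro!: mult_right_mono assms(2))
qed

lemma norm_diff_sq: "(cmod (a - b))\<^sup>2 = (cmod a)\<^sup>2 - 2 * Re (a * cnj b) + (cmod b)\<^sup>2"
  unfolding cmod_power2 by (simp add: power2_eq_square algebra_simps)

lemma bessel_inequality_fourier:
  assumes h: "continuous_on {0..1} h"
  shows "(\<Sum>j<N. (cmod (integral {0..1} (\<lambda>\<nu>. h \<nu> * fourier_char \<nu> (int j))))\<^sup>2)
           \<le> integral {0..1} (\<lambda>\<nu>. (cmod (h \<nu>))\<^sup>2)"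
proof -
  define c where "c j = integral {0..1} (\<lambda>\<nu>. h \<nu> * fourier_char \<nu> (int j))" for j
  define S where "S = (\<Sum>j<N. (cmod (c j))\<^sup>2)"
  have "((\<lambda>\<nu>. h \<nu> * fourier_char \<nu> (int j)) has_integral c j) {0..1}" for j
    unfolding c_def by (intro integrable_integral integrable_continuous_interval continuous_intros h)
  then have "((\<lambda>\<nu>. \<Sum>j<N. cnj (c j) * (h \<nu> * fourier_char \<nu> (int j))) has_integral
      (\<Sum>j<N. cnj (c j) * c j)) {0..1}"
    by (intro has_integral_sum has_integral_mult_right) auto
  moreover have "(\<Sum>j<N. cnj (c j) * (h \<nu> * fourier_char \<nu> (int j))) = h \<nu> * cnj (trig_poly c N \<nu>)" for \<nu>
    unfolding trig_poly_def by (simp add: sum_distrib_left cnj_fourier_char algebra_simps)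
  moreover have "Re (\<Sum>j<N. cnj (c j) * c j) = S"
    unfolding S_def cmod_power2 by (simp add: power2_eq_square)
  ultimately have "((\<lambda>\<nu>. h \<nu> * cnj (trig_poly c N \<nu>)) has_integral (\<Sum>j<N. cnj (c j) * c j)) {0..1}"
    by simp
  from has_integral_linear[OF this bounded_linear_Re]
  have cross: "((\<lambda>\<nu>. Re (h \<nu> * cnj (trig_poly c N \<nu>))) has_integral S) {0..1}"
    using \<open>Re (\<Sum>j<N. cnj (c j) * c j) = S\<close> by (simp add: o_def)
  have "((\<lambda>\<nu>. (cmod (h \<nu>))\<^sup>2) has_integral integral {0..1} (\<lambda>\<nu>. (cmod (h \<nu>))\<^sup>2)) {0..1}"
    by (intro integrable_integral integrable_continuous_interval continuous_intros h)
  then have "((\<lambda>\<nu>. (cmod (h \<nu>))\<^sup>2 - 2 * Re (h \<nu> * cnj (trig_poly c N \<nu>)) + (cmod (trig_poly c N \<nu>))\<^sup>2)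
      has_integral integral {0..1} (\<lambda>\<nu>. (cmod (h \<nu>))\<^sup>2) - 2 * S + S) {0..1}"
    unfolding S_def
    by (intro has_integral_add has_integral_diff has_integral_mult_right
        cross[unfolded S_def] has_integral_norm_trig_poly_sq)
  then have "((\<lambda>\<nu>. (cmod (h \<nu> - trig_poly c N \<nu>))\<^sup>2) has_integral
      integral {0..1} (\<lambda>\<nu>. (cmod (h \<nu>))\<^sup>2) - S) {0..1}"
    by (simp add: norm_diff_sq)
  then have "0 \<le> integral {0..1} (\<lambda>\<nu>. (cmod (h \<nu>))\<^sup>2) - S"
    by (rule has_integral_nonneg) auto
  then show ?thesis unfolding S_def c_def by simp
qed

lemma mult_mat_vec_eq_sum:
  "A \<in> carrier_mat n k \<Longrightarrow> v \<in> carrier_vec k \<Longrightarrow> i < n \<Longrightarrow> (A *\<^sub>v v) $ i = (\<Sum>j<k. A $$ (i, j) * v $ j)"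
  by (simp add: scalar_prod_def atLeast0LessThan)

lemma times_mat_eq_sum:
  "A \<in> carrier_mat n k \<Longrightarrow> B \<in> carrier_mat k p \<Longrightarrow> i < n \<Longrightarrow> j < p \<Longrightarrow>
     (A * B) $$ (i, j) = (\<Sum>l<k. A $$ (i, l) * B $$ (l, j))"
  by (simp add: scalar_prod_def atLeast0LessThan)

lemma op_norm_le:
  assumes "\<And>v. v \<in> carrier_vec (dim_col A) \<Longrightarrow> vnorm v \<le> 1 \<Longrightarrow> vnorm (A *\<^sub>v v) \<le> B"
  shows "op_norm A \<le> B"
  unfolding op_norm_def
proof (rule cSup_least)
  have "vnorm (0\<^sub>v (dim_col A)) \<le> 1" by (simp add: vnorm_def)
  then show "{vnorm (A *\<^sub>v v) | v. v \<in> carrier_vec (dim_col A) \<and> vnorm v \<le> 1} \<noteq> {}"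
    using zero_carrier_vec by blast
qed (use assms in auto)

lemma toeplitz_mult_vec_eq:
  assumes F: "continuous_on {0..1} F" and E: "E \<in> carrier_mat N N"
    and E_eq: "\<And>j k. j < N \<Longrightarrow> k < N \<Longrightarrow> E $$ (j, k) = integral {0..1} (\<lambda>\<nu>. F \<nu> * fourier_char \<nu> (int j - int k))"
    and v: "v \<in> carrier_vec N" and j: "j < N"
  shows "(E *\<^sub>v v) $ j = integral {0..1} (\<lambda>\<nu>. (F \<nu> * trig_poly (\<lambda>k. v $ k) N \<nu>) * fourier_char \<nu> (int j))"
proof -
  have "(E *\<^sub>v v) $ j = (\<Sum>k<N. integral {0..1} (\<lambda>\<nu>. F \<nu> * fourier_char \<nu> (int j - int k)) * v $ k)"
    using mult_mat_vec_eq_sum[OF E v j] E_eq[OF j] by simp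
  also have "\<dots> = (\<Sum>k<N. integral {0..1} (\<lambda>\<nu>. F \<nu> * fourier_char \<nu> (int j - int k) * v $ k))"
    by (simp only: integral_mult_left)
  also have "\<dots> = integral {0..1} (\<lambda>\<nu>. \<Sum>k<N. F \<nu> * fourier_char \<nu> (int j - int k) * v $ k)"
    by (rule integral_sum[symmetric]) (auto intro!: integrable_continuous_interval continuous_intros F)
  also have "(\<lambda>\<nu>. \<Sum>k<N. F \<nu> * fourier_char \<nu> (int j - int k) * v $ k) =
      (\<lambda>\<nu>. (F \<nu> * trig_poly (\<lambda>k. v $ k) N \<nu>) * fourier_char \<nu> (int j))"
  proof
    fix \<nu>
    have "fourier_char \<nu> (int j - int k) = fourier_char \<nu> (- int k) * fourier_char \<nu> (int j)" for k
      by (simp add: fourier_char_mult)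
    then show "(\<Sum>k<N. F \<nu> * fourier_char \<nu> (int j - int k) * v $ k) =
        (F \<nu> * trig_poly (\<lambda>k. v $ k) N \<nu>) * fourier_char \<nu> (int j)"
      unfolding trig_poly_def by (simp add: sum_distrib_left sum_distrib_right algebra_simps)
  qed
  finally show ?thesis .
qed

lemma op_norm_toeplitz_le:
  assumes F: "continuous_on {0..1} F" and F_le: "\<And>\<nu>. \<nu> \<in> {0..1} \<Longrightarrow> cmod (F \<nu>) \<le> B"
    and E: "E \<in> carrier_mat N N"
    and E_eq: "\<And>j k. j < N \<Longrightarrow> k < N \<Longrightarrow> E $$ (j, k) = integral {0..1} (\<lambda>\<nu>. F \<nu> * fourier_char \<nu> (int j - int k))"
  shows "op_norm E \<le> B"
proof (rule op_norm_le)
  have "cmod (F 0) \<le> B" by (rule F_le) simp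
  then have "0 \<le> B" using norm_ge_zero[of "F 0"] by linarith
  fix v assume v: "v \<in> carrier_vec (dim_col E)" "vnorm v \<le> 1"
  define X where "X = trig_poly (\<lambda>k. v $ k) N"
  have "(\<Sum>j<N. (cmod ((E *\<^sub>v v) $ j))\<^sup>2) =
      (\<Sum>j<N. (cmod (integral {0..1} (\<lambda>\<nu>. (F \<nu> * X \<nu>) * fourier_char \<nu> (int j))))\<^sup>2)"
    using toeplitz_mult_vec_eq[OF F E E_eq] v E unfolding X_def by simp
  also have "\<dots> \<le> integral {0..1} (\<lambda>\<nu>. (cmod (F \<nu> * X \<nu>))\<^sup>2)"
    unfolding X_def by (intro bessel_inequality_fourier continuous_intros F)
  also have "\<dots> \<le> integral {0..1} (\<lambda>\<nu>. B\<^sup>2 * (cmod (X \<nu>))\<^sup>2)"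
  proof (rule integral_le)
    show "(\<lambda>\<nu>. (cmod (F \<nu> * X \<nu>))\<^sup>2) integrable_on {0..1}" "(\<lambda>\<nu>. B\<^sup>2 * (cmod (X \<nu>))\<^sup>2) integrable_on {0..1}"
      unfolding X_def by (intro integrable_continuous_interval continuous_intros F)+
    fix \<nu> :: real assume "\<nu> \<in> {0..1}"
    with F_le have "(cmod (F \<nu>))\<^sup>2 \<le> B\<^sup>2" by (intro power_mono) auto
    then show "(cmod (F \<nu> * X \<nu>))\<^sup>2 \<le> B\<^sup>2 * (cmod (X \<nu>))\<^sup>2"
      by (simp add: norm_mult power_mult_distrib mult_right_mono)
  qed
  also have "\<dots> = B\<^sup>2 * (\<Sum>k<N. (cmod (v $ k))\<^sup>2)"
    unfolding X_def using has_integral_norm_trig_poly_sq by (simp add: integral_unique)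
  finally have "vnorm (E *\<^sub>v v) \<le> sqrt (B\<^sup>2 * (\<Sum>k<N. (cmod (v $ k))\<^sup>2))"
    using E unfolding vnorm_def by simp
  also have "\<dots> = B * vnorm v"
    using v E \<open>0 \<le> B\<close> by (simp add: vnorm_def real_sqrt_mult)
  also have "\<dots> \<le> B" using v \<open>0 \<le> B\<close> by (simp add: mult_left_le)
  finally show "vnorm (E *\<^sub>v v) \<le> B" .
qed

section \<open>Truncating a symbol to a finite Toeplitz matrix\<close>

lemma has_sum_sum:
  fixes f :: "'i \<Rightarrow> 'a \<Rightarrow> 'b::topological_comm_monoid_add"
  assumes "finite I" and "\<And>i. i \<in> I \<Longrightarrow> (f i has_sum s i) A"
  shows "((\<lambda>x. \<Sum>i\<in>I. f i x) has_sum (\<Sum>i\<in>I. s i)) A"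
  using assms by (induction I rule: finite_induct) (auto intro: has_sum_add)

lemma card_rows_without_offset_le:
  "card {i\<in>{..<L}. l \<notin> (\<lambda>j. int i - int j) ` {..<L}} \<le> min (nat \<bar>l\<bar>) L"
proof -
  let ?missing = "{i\<in>{..<L}. l \<notin> (\<lambda>j. int i - int j) ` {..<L}}"
  have "?missing \<subseteq> {i\<in>{..<L}. int i < l} \<union> {i\<in>{..<L}. l + int L \<le> int i}"
  proof
    fix i assume "i \<in> ?missing"
    then have "i < L" and not_hit: "\<And>j. j < L \<Longrightarrow> l \<noteq> int i - int j" by auto
    show "i \<in> {i\<in>{..<L}. int i < l} \<union> {i\<in>{..<L}. l + int L \<le> int i}"
    proof (rule ccontr)
      assume "i \<notin> {i\<in>{..<L}. int i < l} \<union> {i\<in>{..<L}. l + int L \<le> int i}"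
      with \<open>i < L\<close> have "nat (int i - l) < L" "l = int i - int (nat (int i - l))" by auto
      with not_hit show False by blast
    qed
  qed
  also have "\<dots> \<subseteq> (if 0 \<le> l then {..<nat l} else {nat (l + int L)..<L})"
    by auto
  finally have "card ?missing \<le> nat \<bar>l\<bar>"
    by (rule card_mono[rotated, THEN order_trans]) auto
  moreover have "card ?missing \<le> L"
    using card_mono[of "{..<L}" ?missing] by auto
  ultimately show ?thesis by simp
qed

lemma min_le_powr_mult:
  fixes x y g :: real
  assumes "0 \<le> x" "0 < y" "0 < g" "g \<le> 1"
  shows "min x y \<le> x powr g * y powr (1 - g)"
proof (cases "x \<le> y")
  case True
  show ?thesis
  proof (cases "x = 0")
    case False
    with assms have "x = x powr g * x powr (1 - g)" by (simp add: powr_add[symmetric])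
    also have "\<dots> \<le> x powr g * y powr (1 - g)"
      using True assms by (intro mult_left_mono powr_mono2) auto
    finally show ?thesis using True by simp
  qed (use assms in simp)
next
  case False
  have "y = y powr g * y powr (1 - g)" using assms by (simp add: powr_add[symmetric])
  also have "\<dots> \<le> x powr g * y powr (1 - g)"
    using False assms by (intro mult_right_mono powr_mono2) auto
  finally show ?thesis using False by simp
qed

lemma card_rows_without_offset_le_powr:
  assumes "0 < g" "g \<le> 1" "1 \<le> L"
  shows "real (card {i\<in>{..<L}. l \<notin> (\<lambda>j. int i - int j) ` {..<L}}) \<le>
           (1 + \<bar>real_of_int l\<bar>) powr g * real L powr (1 - g)"
proof -
  have "real (card {i\<in>{..<L}. l \<notin> (\<lambda>j. int i - int j) ` {..<L}}) \<le> real (min (nat \<bar>l\<bar>) L)"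
    using card_rows_without_offset_le[of L l] by linarith
  also have "\<dots> = min \<bar>real_of_int l\<bar> (real L)"
  proof -
    have "real (nat \<bar>l\<bar>) = \<bar>real_of_int l\<bar>" by simp
    moreover from this have "(nat \<bar>l\<bar> \<le> L) = (\<bar>real_of_int l\<bar> \<le> real L)"
      by (metis of_nat_le_iff)
    ultimately show ?thesis unfolding min_def by auto
  qed
  also have "\<dots> \<le> \<bar>real_of_int l\<bar> powr g * real L powr (1 - g)"
    using assms by (intro min_le_powr_mult) auto
  also have "\<dots> \<le> (1 + \<bar>real_of_int l\<bar>) powr g * real L powr (1 - g)"
    using assms by (intro mult_right_mono powr_mono2) auto
  finally show ?thesis .
qed

definition toeplitz_tail :: "(int \<Rightarrow> complex) \<Rightarrow> nat \<Rightarrow> nat \<Rightarrow> real" where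
  "toeplitz_tail r L i = (\<Sum>\<^sub>\<infinity>l\<in>UNIV - (\<lambda>j. int i - int j) ` {..<L}. cmod (r l))"

definition acoef :: "nat \<Rightarrow> real \<Rightarrow> nat \<Rightarrow> complex" where
  "acoef L \<nu> i = of_real (1 / sqrt (real L)) * fourier_char \<nu> (int i)"

lemma norm_acoef: "cmod (acoef L \<nu> i) = 1 / sqrt (real L)"
  by (simp add: acoef_def norm_mult norm_divide)

lemma sum_norm_acoef_sq: "1 \<le> L \<Longrightarrow> (\<Sum>i<L. (cmod (acoef L \<nu> i))\<^sup>2) = 1"
  by (simp add: norm_acoef power_divide)

lemma sum_cnj_acoef_mult: "1 \<le> L \<Longrightarrow> (\<Sum>i<L. cnj (acoef L \<nu> i) * acoef L \<nu> i) = 1"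
proof -
  assume "1 \<le> L"
  have sq: "cnj (acoef L \<nu> i) * acoef L \<nu> i = of_real ((cmod (acoef L \<nu> i))\<^sup>2)" for i
    using complex_norm_square[of "acoef L \<nu> i"] by (simp add: mult.commute)
  show ?thesis
    unfolding sq of_real_sum[symmetric] sum_norm_acoef_sq[OF \<open>1 \<le> L\<close>] by simp
qed

definition symbol_residual :: "(int \<Rightarrow> complex) \<Rightarrow> nat \<Rightarrow> real \<Rightarrow> nat \<Rightarrow> complex" where
  "symbol_residual r L \<nu> i = fourier_series r \<nu> * acoef L \<nu> i - (\<Sum>j<L. r (int i - int j) * acoef L \<nu> j)"

locale weighted_summable =
  fixes r :: "int \<Rightarrow> complex" and \<gamma>0 C :: real
  assumes exponent_pos: "0 < \<gamma>0"
    and weighted_norms_summable: "(\<lambda>n. (1 + \<bar>real_of_int n\<bar>) powr \<gamma>0 * cmod (r n)) summable_on UNIV"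
    and weighted_sum_le: "(\<Sum>\<^sub>\<infinity>n. (1 + \<bar>real_of_int n\<bar>) powr \<gamma>0 * cmod (r n)) \<le> C"
begin

lemma norm_le_weighted: "cmod (r l) \<le> (1 + \<bar>real_of_int l\<bar>) powr \<gamma>0 * cmod (r l)"
proof -
  have "1 \<le> (1 + \<bar>real_of_int l\<bar>) powr \<gamma>0" using exponent_pos by (intro ge_one_powr_ge_zero) auto
  then show ?thesis by (simp add: mult_le_cancel_right1)
qed

lemma abs_summable: "(\<lambda>l. cmod (r l)) summable_on UNIV"
  by (rule summable_on_comparison_test[OF weighted_norms_summable]) (auto simp: norm_le_weighted)

lemma infsum_norm_le: "(\<Sum>\<^sub>\<infinity>l. cmod (r l)) \<le> C"
  using infsum_mono[OF abs_summable weighted_norms_summable norm_le_weighted] weighted_sum_le by linarith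

lemma bound_nonneg: "0 \<le> C"
  using infsum_norm_le infsum_nonneg[of UNIV "\<lambda>l. cmod (r l)"] by auto

lemma toeplitz_tail_le: "toeplitz_tail r L i \<le> C"
proof -
  have "toeplitz_tail r L i \<le> (\<Sum>\<^sub>\<infinity>l. cmod (r l))"
    unfolding toeplitz_tail_def
    by (intro infsum_mono_neutral summable_on_subset_banach[OF abs_summable] abs_summable) auto
  with infsum_norm_le show ?thesis by linarith
qed

lemma sum_toeplitz_tail_le:
  assumes "1 \<le> L"
  shows "(\<Sum>i<L. toeplitz_tail r L i) \<le> real L powr (1 - min \<gamma>0 1) * C"
proof -
  define g where "g = min \<gamma>0 1"
  define h where "h i l = (if l \<in> (\<lambda>j. int i - int j) ` {..<L} then 0 else cmod (r l))" for i l
  have "(h i has_sum toeplitz_tail r L i) UNIV" for i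
  proof -
    have "h i summable_on UNIV"
      unfolding h_def by (rule summable_on_comparison_test[OF abs_summable]) auto
    moreover have "infsum (h i) UNIV = toeplitz_tail r L i"
      unfolding toeplitz_tail_def h_def by (rule infsum_cong_neutral) auto
    ultimately show ?thesis by (simp add: has_sum_iff)
  qed
  then have "((\<lambda>l. \<Sum>i<L. h i l) has_sum (\<Sum>i<L. toeplitz_tail r L i)) UNIV"
    by (intro has_sum_sum) auto
  moreover have "((\<lambda>l. real L powr (1 - g) * ((1 + \<bar>real_of_int l\<bar>) powr \<gamma>0 * cmod (r l))) has_sum
      real L powr (1 - g) * (\<Sum>\<^sub>\<infinity>l. (1 + \<bar>real_of_int l\<bar>) powr \<gamma>0 * cmod (r l))) UNIV"
    by (intro has_sum_cmult_right has_sum_infsum weighted_norms_summable)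
  moreover have "(\<Sum>i<L. h i l) \<le> real L powr (1 - g) * ((1 + \<bar>real_of_int l\<bar>) powr \<gamma>0 * cmod (r l))" for l
  proof -
    have "(\<Sum>i<L. h i l) = cmod (r l) * real (card {i\<in>{..<L}. l \<notin> (\<lambda>j. int i - int j) ` {..<L}})"
      unfolding h_def by (simp add: sum.If_cases Int_def)
    also have "\<dots> \<le> cmod (r l) * ((1 + \<bar>real_of_int l\<bar>) powr g * real L powr (1 - g))"
      using exponent_pos assms
      by (intro mult_left_mono card_rows_without_offset_le_powr) (auto simp: g_def)
    also have "\<dots> \<le> cmod (r l) * ((1 + \<bar>real_of_int l\<bar>) powr \<gamma>0 * real L powr (1 - g))"
      by (intro mult_left_mono mult_right_mono powr_mono) (auto simp: g_def)
    finally show ?thesis by (simp add: algebra_simps)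
  qed
  ultimately have "(\<Sum>i<L. toeplitz_tail r L i) \<le>
      real L powr (1 - g) * (\<Sum>\<^sub>\<infinity>l. (1 + \<bar>real_of_int l\<bar>) powr \<gamma>0 * cmod (r l))"
    by (rule has_sum_mono)
  also have "\<dots> \<le> real L powr (1 - g) * C"
    using weighted_sum_le by (intro mult_left_mono) auto
  finally show ?thesis unfolding g_def .
qed

lemma norm_symbol_residual_le:
  "cmod (symbol_residual r L \<nu> i) \<le> toeplitz_tail r L i / sqrt (real L)"
proof -
  define W where "W = (\<lambda>j. int i - int j) ` {..<L}"
  have "inj_on (\<lambda>j. int i - int j) {..<L}" by (auto simp: inj_on_def)
  then have "(\<Sum>l\<in>W. r l * fourier_char \<nu> (int i - l)) = (\<Sum>j<L. r (int i - int j) * fourier_char \<nu> (int j))"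
    unfolding W_def by (simp add: sum.reindex)
  then have "cmod (fourier_series r \<nu> * fourier_char \<nu> (int i) - (\<Sum>j<L. r (int i - int j) * fourier_char \<nu> (int j)))
      \<le> toeplitz_tail r L i"
    using norm_fourier_series_minus_partial_le[OF abs_summable, of W \<nu> "int i"]
    unfolding toeplitz_tail_def W_def by simp
  moreover have "symbol_residual r L \<nu> i = of_real (1 / sqrt (real L)) *
      (fourier_series r \<nu> * fourier_char \<nu> (int i) - (\<Sum>j<L. r (int i - int j) * fourier_char \<nu> (int j)))"
    unfolding symbol_residual_def acoef_def by (simp add: sum_distrib_left algebra_simps)
  ultimately show ?thesis
    by (simp add: norm_divide divide_right_mono)
qed

lemma norm_inner_acoef_residual_le:
  assumes "1 \<le> L"
  shows "cmod (\<Sum>i<L. cnj (acoef L \<nu> i) * symbol_residual r L \<nu> i) \<le> C * real L powr (- min \<gamma>0 1)"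
proof -
  have "cmod (\<Sum>i<L. cnj (acoef L \<nu> i) * symbol_residual r L \<nu> i)
      \<le> (\<Sum>i<L. (1 / sqrt (real L)) * (toeplitz_tail r L i / sqrt (real L)))"
  proof (rule order_trans[OF norm_sum sum_mono])
    fix i
    show "cmod (cnj (acoef L \<nu> i) * symbol_residual r L \<nu> i)
        \<le> (1 / sqrt (real L)) * (toeplitz_tail r L i / sqrt (real L))"
      unfolding norm_mult complex_mod_cnj norm_acoef
      by (intro mult_left_mono norm_symbol_residual_le) auto
  qed
  also have "\<dots> = (\<Sum>i<L. toeplitz_tail r L i) / real L"
    using assms by (simp add: sum_divide_distrib)
  also have "\<dots> \<le> real L powr (1 - min \<gamma>0 1) * C / real L"
    using assms by (intro divide_right_mono sum_toeplitz_tail_le) auto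
  also have "\<dots> = C * real L powr (- min \<gamma>0 1)"
    using assms by (simp add: powr_diff powr_minus divide_simps)
  finally show ?thesis .
qed

lemma sum_norm_symbol_residual_sq_le:
  assumes "1 \<le> L"
  shows "(\<Sum>i<L. (cmod (symbol_residual r L \<nu> i))\<^sup>2) \<le> C * C * real L powr (- min \<gamma>0 1)"
proof -
  have "(\<Sum>i<L. (cmod (symbol_residual r L \<nu> i))\<^sup>2) \<le> (\<Sum>i<L. C * toeplitz_tail r L i / real L)"
  proof (rule sum_mono)
    fix i
    have tail_nonneg: "0 \<le> toeplitz_tail r L i"
      unfolding toeplitz_tail_def by (intro infsum_nonneg) auto
    have "(cmod (symbol_residual r L \<nu> i))\<^sup>2 \<le> (toeplitz_tail r L i / sqrt (real L))\<^sup>2"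
      by (intro power_mono norm_symbol_residual_le) auto
    also have "\<dots> = toeplitz_tail r L i * toeplitz_tail r L i / real L"
      using assms by (simp add: power2_eq_square)
    also have "\<dots> \<le> C * toeplitz_tail r L i / real L"
      using toeplitz_tail_le tail_nonneg by (intro divide_right_mono mult_right_mono) auto
    finally show "(cmod (symbol_residual r L \<nu> i))\<^sup>2 \<le> C * toeplitz_tail r L i / real L" .
  qed
  also have "\<dots> = C * (\<Sum>i<L. toeplitz_tail r L i) / real L"
    by (simp add: sum_divide_distrib sum_distrib_left)
  also have "\<dots> \<le> C * (real L powr (1 - min \<gamma>0 1) * C) / real L"
    using bound_nonneg assms by (intro divide_right_mono mult_left_mono sum_toeplitz_tail_le) auto
  also have "\<dots> = C * C * real L powr (- min \<gamma>0 1)"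
    using assms by (simp add: powr_diff powr_minus divide_simps)
  finally show ?thesis .
qed

end

section \<open>The pointwise estimate\<close>

lemma sum_mult_inverse_apply:
  fixes A B :: "nat \<Rightarrow> nat \<Rightarrow> 'a::comm_ring_1"
  assumes "\<And>i k. i < L \<Longrightarrow> k < L \<Longrightarrow> (\<Sum>j<L. A i j * B j k) = (if i = k then 1 else 0)" and "i < L"
  shows "(\<Sum>j<L. A i j * (\<Sum>k<L. B j k * x k)) = x i"
proof -
  have "(\<Sum>j<L. A i j * (\<Sum>k<L. B j k * x k)) = (\<Sum>j<L. \<Sum>k<L. A i j * B j k * x k)"
    by (simp add: sum_distrib_left mult.assoc)
  also have "\<dots> = (\<Sum>k<L. (\<Sum>j<L. A i j * B j k) * x k)"
    by (subst sum.swap) (simp add: sum_distrib_right)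
  also have "\<dots> = (\<Sum>k<L. if i = k then x k else 0)"
    by (rule sum.cong) (auto simp: assms)
  finally show ?thesis using \<open>i < L\<close> by simp
qed

lemma mult_le_weighted_squares:
  fixes x y c :: real
  assumes "0 < c"
  shows "x * y \<le> c / 2 * x\<^sup>2 + y\<^sup>2 / (2 * c)"
proof -
  have "0 \<le> (c * x - y)\<^sup>2" by simp
  then have "2 * c * (x * y) \<le> c * (c * x\<^sup>2) + y\<^sup>2" by (simp add: power2_eq_square algebra_simps)
  then have "2 * c * (x * y) \<le> 2 * c * (c / 2 * x\<^sup>2 + y\<^sup>2 / (2 * c))"
    using assms by (simp add: algebra_simps power2_eq_square)
  then show ?thesis using assms by (simp add: mult_le_cancel_left_pos)
qed

lemma norm_inner_le_of_coercive:
  assumes "0 < c" and coercive: "c * (\<Sum>i<L. (cmod (z i))\<^sup>2) \<le> Re (\<Sum>i<L. cnj (z i) * b i)"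
  shows "cmod (\<Sum>i<L. cnj (b i) * z i) \<le> (\<Sum>i<L. (cmod (b i))\<^sup>2) / c"
proof -
  define Z where "Z = (\<Sum>i<L. (cmod (z i))\<^sup>2)"
  define B where "B = (\<Sum>i<L. (cmod (b i))\<^sup>2)"
  define P where "P = (\<Sum>i<L. cmod (z i) * cmod (b i))"
  have "cmod (z i) * cmod (b i) \<le> c / 2 * (cmod (z i))\<^sup>2 + (cmod (b i))\<^sup>2 / (2 * c)" for i
    using \<open>0 < c\<close> by (rule mult_le_weighted_squares)
  then have "P \<le> (\<Sum>i<L. c / 2 * (cmod (z i))\<^sup>2 + (cmod (b i))\<^sup>2 / (2 * c))"
    unfolding P_def by (rule sum_mono)
  also have "\<dots> = c / 2 * Z + B / (2 * c)"
    unfolding Z_def B_def by (simp add: sum.distrib sum_distrib_left sum_divide_distrib)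
  finally have P_le: "P \<le> c / 2 * Z + B / (2 * c)" .
  have "Re (\<Sum>i<L. cnj (z i) * b i) \<le> cmod (\<Sum>i<L. cnj (z i) * b i)"
    by (rule complex_Re_le_cmod)
  also have "\<dots> \<le> P"
    unfolding P_def by (rule order_trans[OF norm_sum]) (simp add: norm_mult)
  finally have "c * Z \<le> P" using coercive unfolding Z_def by linarith
  moreover have "c / 2 * Z = c * Z / 2" by simp
  ultimately have "P \<le> 2 * (B / (2 * c))" using P_le by linarith
  then have "P \<le> B / c" by simp
  moreover have "cmod (\<Sum>i<L. cnj (b i) * z i) \<le> P"
    unfolding P_def by (rule order_trans[OF norm_sum]) (simp add: norm_mult mult.commute)
  ultimately show ?thesis unfolding B_def by linarith
qed

lemma inverse_form_defect_eq:
  fixes R Ri :: "nat \<Rightarrow> nat \<Rightarrow> complex" and a b :: "nat \<Rightarrow> complex"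
  assumes herm: "\<And>i j. cnj (R i j) = R j i"
    and right_inv: "\<And>i k. i < L \<Longrightarrow> k < L \<Longrightarrow> (\<Sum>j<L. R i j * Ri j k) = (if i = k then 1 else 0)"
    and left_inv: "\<And>i k. i < L \<Longrightarrow> k < L \<Longrightarrow> (\<Sum>j<L. Ri i j * R j k) = (if i = k then 1 else 0)"
    and a_unit: "(\<Sum>i<L. cnj (a i) * a i) = 1"
    and b_eq: "\<And>i. b i = g * a i - (\<Sum>j<L. R i j * a j)"
  shows "cnj g * (g * (\<Sum>i<L. cnj (a i) * (\<Sum>j<L. Ri i j * a j)) - 1) =
           (\<Sum>i<L. cnj (a i) * b i) + (\<Sum>i<L. cnj (b i) * (\<Sum>j<L. Ri i j * b j))"
proof -
  define z where "z i = (\<Sum>j<L. Ri i j * b j)" for i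
  have z_eq: "z i = g * (\<Sum>j<L. Ri i j * a j) - a i" if "i < L" for i
  proof -
    have "z i = g * (\<Sum>j<L. Ri i j * a j) - (\<Sum>j<L. Ri i j * (\<Sum>k<L. R j k * a k))"
      unfolding z_def b_eq by (simp add: sum_subtractf sum_distrib_left algebra_simps)
    then show ?thesis using sum_mult_inverse_apply[OF left_inv that] by simp
  qed
  have az: "(\<Sum>i<L. cnj (a i) * z i) = g * (\<Sum>i<L. cnj (a i) * (\<Sum>j<L. Ri i j * a j)) - 1"
  proof -
    have "(\<Sum>i<L. cnj (a i) * z i) =
        (\<Sum>i<L. g * (cnj (a i) * (\<Sum>j<L. Ri i j * a j)) - cnj (a i) * a i)"
      by (rule sum.cong) (auto simp: z_eq algebra_simps)
    then show ?thesis using a_unit by (simp add: sum_subtractf sum_distrib_left)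
  qed
  have "(\<Sum>i<L. cnj (\<Sum>k<L. R i k * a k) * z i) = (\<Sum>i<L. \<Sum>k<L. cnj (a k) * (R k i * z i))"
    by (simp add: sum_distrib_left sum_distrib_right herm algebra_simps)
  also have "\<dots> = (\<Sum>k<L. cnj (a k) * (\<Sum>i<L. R k i * z i))"
    by (subst sum.swap) (simp add: sum_distrib_left)
  also have "\<dots> = (\<Sum>k<L. cnj (a k) * b k)"
    unfolding z_def by (intro sum.cong refl) (simp add: sum_mult_inverse_apply[OF right_inv])
  finally have bz: "(\<Sum>i<L. cnj (b i) * z i) = cnj g * (\<Sum>i<L. cnj (a i) * z i) - (\<Sum>k<L. cnj (a k) * b k)"
    unfolding b_eq by (simp add: sum_subtractf sum_distrib_left algebra_simps)
  have "cnj g * (g * (\<Sum>i<L. cnj (a i) * (\<Sum>j<L. Ri i j * a j)) - 1) = cnj g * (\<Sum>i<L. cnj (a i) * z i)"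
    by (simp add: az)
  also have "\<dots> = (\<Sum>i<L. cnj (a i) * b i) + (\<Sum>i<L. cnj (b i) * z i)"
    by (simp add: bz)
  finally show ?thesis unfolding z_def .
qed

lemma inverse_form_defect_le:
  fixes R Ri :: "nat \<Rightarrow> nat \<Rightarrow> complex" and a b :: "nat \<Rightarrow> complex"
  assumes herm: "\<And>i j. cnj (R i j) = R j i"
    and coercive: "\<And>x. c * (\<Sum>i<L. (cmod (x i))\<^sup>2) \<le> Re (\<Sum>i<L. cnj (x i) * (\<Sum>j<L. R i j * x j))"
    and "0 < c"
    and right_inv: "\<And>i k. i < L \<Longrightarrow> k < L \<Longrightarrow> (\<Sum>j<L. R i j * Ri j k) = (if i = k then 1 else 0)"
    and left_inv: "\<And>i k. i < L \<Longrightarrow> k < L \<Longrightarrow> (\<Sum>j<L. Ri i j * R j k) = (if i = k then 1 else 0)"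
    and a_unit: "(\<Sum>i<L. cnj (a i) * a i) = 1"
    and b_eq: "\<And>i. b i = g * a i - (\<Sum>j<L. R i j * a j)"
  shows "cmod g * cmod (g * (\<Sum>i<L. cnj (a i) * (\<Sum>j<L. Ri i j * a j)) - 1)
           \<le> cmod (\<Sum>i<L. cnj (a i) * b i) + (\<Sum>i<L. (cmod (b i))\<^sup>2) / c"
proof -
  define z where "z i = (\<Sum>j<L. Ri i j * b j)" for i
  have "(\<Sum>i<L. cnj (z i) * (\<Sum>j<L. R i j * z j)) = (\<Sum>i<L. cnj (z i) * b i)"
    unfolding z_def by (intro sum.cong refl) (simp add: sum_mult_inverse_apply[OF right_inv])
  with coercive[of z] have bz: "cmod (\<Sum>i<L. cnj (b i) * z i) \<le> (\<Sum>i<L. (cmod (b i))\<^sup>2) / c"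
    by (intro norm_inner_le_of_coercive \<open>0 < c\<close>) simp
  have "cmod g * cmod (g * (\<Sum>i<L. cnj (a i) * (\<Sum>j<L. Ri i j * a j)) - 1) =
      cmod (cnj g * (g * (\<Sum>i<L. cnj (a i) * (\<Sum>j<L. Ri i j * a j)) - 1))"
    by (simp add: norm_mult)
  also have "\<dots> = cmod ((\<Sum>i<L. cnj (a i) * b i) + (\<Sum>i<L. cnj (b i) * z i))"
    using inverse_form_defect_eq[OF herm right_inv left_inv a_unit b_eq] by (simp add: z_def)
  also have "\<dots> \<le> cmod (\<Sum>i<L. cnj (a i) * b i) + cmod (\<Sum>i<L. cnj (b i) * z i)"
    by (rule norm_triangle_ineq)
  finally show ?thesis using bz by linarith
qed

locale coercive_symbol = weighted_summable +
  fixes c :: real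
  assumes coercivity_pos: "0 < c"
    and hermitian: "\<And>k. r (- k) = cnj (r k)"
    and coercive: "\<And>n x. c * (\<Sum>i<n. (cmod (x i))\<^sup>2) \<le> Re (\<Sum>i<n. cnj (x i) * (\<Sum>j<n. r (int i - int j) * x j))"
begin

lemma norm_fourier_series_ge_approx:
  assumes "1 \<le> L"
  shows "c - C * real L powr (- min \<gamma>0 1) \<le> cmod (fourier_series r \<nu>)"
proof -
  let ?a = "acoef L \<nu>"
  have "fourier_series r \<nu> = fourier_series r \<nu> * (\<Sum>i<L. cnj (?a i) * ?a i)"
    using sum_cnj_acoef_mult[OF assms] by simp
  also have "\<dots> = (\<Sum>i<L. cnj (?a i) * symbol_residual r L \<nu> i) +
      (\<Sum>i<L. cnj (?a i) * (\<Sum>j<L. r (int i - int j) * ?a j))"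
    unfolding symbol_residual_def by (simp add: sum_distrib_left sum_subtractf algebra_simps)
  finally have g_eq: "fourier_series r \<nu> = \<dots>" .
  have "c = c * (\<Sum>i<L. (cmod (?a i))\<^sup>2)" using sum_norm_acoef_sq[OF assms] by simp
  also have "\<dots> \<le> Re (\<Sum>i<L. cnj (?a i) * (\<Sum>j<L. r (int i - int j) * ?a j))" by (rule coercive)
  finally have "c \<le> \<dots>" .
  moreover have "- (C * real L powr (- min \<gamma>0 1)) \<le> Re (\<Sum>i<L. cnj (?a i) * symbol_residual r L \<nu> i)"
    using norm_inner_acoef_residual_le[OF assms, of \<nu>]
      abs_Re_le_cmod[of "\<Sum>i<L. cnj (?a i) * symbol_residual r L \<nu> i"] by linarith
  ultimately have "c - C * real L powr (- min \<gamma>0 1) \<le> Re (fourier_series r \<nu>)"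
    by (subst g_eq) simp
  then show ?thesis using complex_Re_le_cmod order_trans by blast
qed

lemma norm_fourier_series_ge: "c \<le> cmod (fourier_series r \<nu>)"
proof (rule ccontr)
  assume "\<not> c \<le> cmod (fourier_series r \<nu>)"
  then have gap: "0 < c - cmod (fourier_series r \<nu>)" by simp
  have "((\<lambda>L::nat. C * real L powr (- min \<gamma>0 1)) \<longlongrightarrow> C * 0) sequentially"
    using exponent_pos by (intro tendsto_mult tendsto_const tendsto_neg_powr filterlim_real_sequentially) auto
  from order_tendstoD(2)[OF this[simplified] gap]
  have "\<forall>\<^sub>F L in sequentially. C * real L powr (- min \<gamma>0 1) < c - cmod (fourier_series r \<nu>)" .
  then obtain L :: nat where "C * real L powr (- min \<gamma>0 1) < c - cmod (fourier_series r \<nu>)" "1 \<le> L"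
    using eventually_ge_at_top[of 1] by (metis (mono_tags) eventually_conj eventually_happens' sequentially_bot)
  then show False using norm_fourier_series_ge_approx[of L \<nu>] by linarith
qed

lemma norm_symbol_inverse_form_le:
  fixes Ri :: "nat \<Rightarrow> nat \<Rightarrow> complex"
  assumes L: "1 \<le> L"
    and right_inv: "\<And>i k. i < L \<Longrightarrow> k < L \<Longrightarrow> (\<Sum>j<L. r (int i - int j) * Ri j k) = (if i = k then 1 else 0)"
    and left_inv: "\<And>i k. i < L \<Longrightarrow> k < L \<Longrightarrow> (\<Sum>j<L. Ri i j * r (int j - int k)) = (if i = k then 1 else 0)"
  shows "cmod (fourier_series r \<nu> * (\<Sum>i<L. cnj (acoef L \<nu> i) * (\<Sum>j<L. Ri i j * acoef L \<nu> j)) - 1)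
           \<le> (C + C * C / c) / c * real L powr (- min \<gamma>0 1)"
proof -
  let ?g = "fourier_series r \<nu>" and ?e = "real L powr (- min \<gamma>0 1)"
  let ?defect = "cmod (?g * (\<Sum>i<L. cnj (acoef L \<nu> i) * (\<Sum>j<L. Ri i j * acoef L \<nu> j)) - 1)"
  have "cmod ?g * ?defect \<le> cmod (\<Sum>i<L. cnj (acoef L \<nu> i) * symbol_residual r L \<nu> i) +
      (\<Sum>i<L. (cmod (symbol_residual r L \<nu> i))\<^sup>2) / c"
    using hermitian coercive coercivity_pos right_inv left_inv sum_cnj_acoef_mult[OF L]
    by (intro inverse_form_defect_le[where R = "\<lambda>i j. r (int i - int j)"])
       (auto simp: symbol_residual_def simp flip: hermitian)
  also have "\<dots> \<le> C * ?e + C * C * ?e / c"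
    using coercivity_pos norm_inner_acoef_residual_le[OF L] sum_norm_symbol_residual_sq_le[OF L]
    by (intro add_mono divide_right_mono) auto
  finally have "c * ?defect \<le> (C + C * C / c) * ?e"
    using mult_right_mono[OF norm_fourier_series_ge, of ?defect \<nu>] by (simp add: algebra_simps)
  then show ?thesis
    using coercivity_pos by (simp add: field_simps)
qed

end

section \<open>The covariance matrices of the model\<close>

lemma cov_eq_integral: "cov S m k = integral {0..1} (\<lambda>\<nu>. of_real (S m \<nu>) * fourier_char \<nu> k)"
  unfolding cov_def fourier_char_def ..

lemma cov_uminus: "cov S m (- k) = cnj (cov S m k)"
  unfolding cov_eq_integral integral_cnj by (simp add: cnj_fourier_char)

lemma toep_carrier: "toep S m L \<in> carrier_mat L L"
  unfolding toep_def by simp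

lemma toep_index: "i < L \<Longrightarrow> j < L \<Longrightarrow> toep S m L $$ (i, j) = cov S m (int i - int j)"
  unfolding toep_def by simp

lemma avec_carrier: "avec L \<nu> \<in> carrier_vec L"
  unfolding avec_def dvec_def by simp

lemma avec_index: "i < L \<Longrightarrow> avec L \<nu> $ i = acoef L \<nu> i"
  unfolding avec_def dvec_def acoef_def fourier_char_def by simp

lemma dvec_index: "j < N \<Longrightarrow> dvec N \<nu> $ j = fourier_char \<nu> (int j)"
  unfolding dvec_def fourier_char_def by simp

lemma mat_inv_of_injective:
  fixes A :: "complex mat"
  assumes A: "A \<in> carrier_mat n n"
    and inj: "\<And>v. v \<in> carrier_vec n \<Longrightarrow> A *\<^sub>v v = 0\<^sub>v n \<Longrightarrow> v = 0\<^sub>v n"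
  shows "mat_inv A \<in> carrier_mat n n \<and> A * mat_inv A = 1\<^sub>m n \<and> mat_inv A * A = 1\<^sub>m n"
proof -
  have "det A \<noteq> 0" using det_0_iff_vec_prod_zero_field[OF A] inj by blast
  from det_non_zero_imp_unit[OF A this, unfolded Units_def, of "()"]
  obtain B where B: "B \<in> carrier_mat n n" and BA: "B * A = 1\<^sub>m n" and AB: "A * B = 1\<^sub>m n"
    by (auto simp: ring_mat_def)
  have "mat_inv A = B"
    unfolding mat_inv_def
  proof (rule the_equality)
    show "B \<in> carrier_mat (dim_row A) (dim_row A) \<and> A * B = 1\<^sub>m (dim_row A) \<and> B * A = 1\<^sub>m (dim_row A)"
      using A B AB BA by simp
  next
    fix B' assume "B' \<in> carrier_mat (dim_row A) (dim_row A) \<and> A * B' = 1\<^sub>m (dim_row A) \<and> B' * A = 1\<^sub>m (dim_row A)"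
    then have B': "B' \<in> carrier_mat n n" "B' * A = 1\<^sub>m n" using A by auto
    have "B' = B' * (A * B)" using B' AB right_mult_one_mat[of B' n n] by simp
    also have "\<dots> = (B' * A) * B" by (rule sym, rule assoc_mult_mat) (use B' A B in auto)
    finally show "B' = B" using B' B by simp
  qed
  then show ?thesis using B AB BA by simp
qed

lemma has_fourier_coeffs_cov:
  assumes "S m integrable_on {0..1}" and "\<And>\<nu>. \<nu> \<in> {0..1} \<Longrightarrow> 0 \<le> S m \<nu>"
  shows "has_fourier_coeffs (\<lambda>\<nu>. of_real (S m \<nu>)) (cov S m)"
  using has_fourier_coeffs_of_real_nonneg[OF assms] by (simp add: cov_eq_integral[abs_def])

lemma coercive_symbol_cov:
  assumes "weighted_summable (cov S m) \<gamma>0 C" and "0 < c"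
    and "S m integrable_on {0..1}" and S_ge: "\<And>\<nu>. \<nu> \<in> {0..1} \<Longrightarrow> c \<le> S m \<nu>"
  shows "coercive_symbol (cov S m) \<gamma>0 C c"
proof -
  have "has_fourier_coeffs (\<lambda>\<nu>. of_real (S m \<nu>)) (cov S m)"
    using assms(3) S_ge \<open>0 < c\<close> by (intro has_fourier_coeffs_cov) force+
  then show ?thesis
    using assms(1,2) cov_uminus toeplitz_form_ge[OF _ S_ge]
    by (simp add: coercive_symbol_def coercive_symbol_axioms_def)
qed

lemma toep_mat_inv:
  assumes "coercive_symbol (cov S m) \<gamma>0 C c"
  shows "mat_inv (toep S m L) \<in> carrier_mat L L \<and> toep S m L * mat_inv (toep S m L) = 1\<^sub>m L \<and>
           mat_inv (toep S m L) * toep S m L = 1\<^sub>m L"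
proof (rule mat_inv_of_injective[OF toep_carrier])
  fix v :: "complex vec" assume v: "v \<in> carrier_vec L" and "toep S m L *\<^sub>v v = 0\<^sub>v L"
  have "(\<Sum>j<L. cov S m (int i - int j) * v $ j) = 0" if "i < L" for i
  proof -
    have "(\<Sum>j<L. cov S m (int i - int j) * v $ j) = (toep S m L *\<^sub>v v) $ i"
      using mult_mat_vec_eq_sum[OF toep_carrier v that] that by (simp add: toep_index)
    also have "\<dots> = 0" using \<open>toep S m L *\<^sub>v v = 0\<^sub>v L\<close> that by simp
    finally show ?thesis .
  qed
  then have "c * (\<Sum>i<L. (cmod (v $ i))\<^sup>2) \<le> 0"
    using coercive_symbol.coercive[OF assms, where n = L and x = "\<lambda>i. v $ i"] by simp
  then have "(\<Sum>i<L. (cmod (v $ i))\<^sup>2) = 0"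
    using coercive_symbol.coercivity_pos[OF assms] sum_nonneg[of "{..<L}" "\<lambda>i. (cmod (v $ i))\<^sup>2"]
    by (simp add: mult_le_0_iff)
  then show "v = 0\<^sub>v L"
    using v by (intro eq_vecI) (auto simp: sum_nonneg_eq_0_iff)
qed

definition aform :: "complex mat \<Rightarrow> nat \<Rightarrow> real \<Rightarrow> complex" where
  "aform B L \<nu> = (\<Sum>i<L. cnj (acoef L \<nu> i) * (\<Sum>j<L. B $$ (i, j) * acoef L \<nu> j))"

lemma continuous_on_aform [continuous_intros]: "continuous_on A (aform B L)"
  unfolding aform_def acoef_def by (intro continuous_intros)

lemma epsML_eq_aform:
  assumes "mat_inv (toep S m L) \<in> carrier_mat L L"
  shows "epsML S m L \<nu> = of_real (S m \<nu>) * aform (mat_inv (toep S m L)) L \<nu> - 1"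
  unfolding epsML_def aform_def
  using mult_mat_vec_eq_sum[OF assms avec_carrier] by (simp add: avec_index)

lemma aform_mult_fourier_char:
  "aform B L \<nu> * fourier_char \<nu> p = (\<Sum>x\<in>{..<L}\<times>{..<L}.
     (B $$ (fst x, snd x) / of_nat L) * fourier_char \<nu> (int (snd x) - int (fst x) + p))"
proof -
  have summand: "cnj (acoef L \<nu> i) * (B $$ (i, j) * acoef L \<nu> j) * fourier_char \<nu> p =
      (B $$ (i, j) / of_nat L) * fourier_char \<nu> (int j - int i + p)" for i j
  proof -
    have "cnj (acoef L \<nu> i) * acoef L \<nu> j * fourier_char \<nu> p =
        of_real (1 / real L) * fourier_char \<nu> (int j - int i + p)"
      unfolding acoef_def
      by (simp add: cnj_fourier_char fourier_char_mult algebra_simps flip: of_real_mult)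
    then show ?thesis by (simp add: divide_inverse of_real_inverse algebra_simps)
  qed
  have "aform B L \<nu> * fourier_char \<nu> p =
      (\<Sum>i<L. \<Sum>j<L. (B $$ (i, j) / of_nat L) * fourier_char \<nu> (int j - int i + p))"
    unfolding aform_def sum_distrib_right sum_distrib_left summand ..
  then show ?thesis by (simp add: sum.cartesian_product case_prod_beta)
qed

lemma has_fourier_coeffs_aform:
  assumes "has_fourier_coeffs \<phi> r"
  shows "has_fourier_coeffs (\<lambda>\<nu>. \<phi> \<nu> * aform B L \<nu> - 1)
           (\<lambda>p. (\<Sum>x\<in>{..<L}\<times>{..<L}. (B $$ (fst x, snd x) / of_nat L) * r (int (snd x) - int (fst x) + p)) -
                (if p = 0 then 1 else 0))"
  unfolding has_fourier_coeffs_def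
proof
  fix p
  have "((\<lambda>\<nu>. \<phi> \<nu> * (aform B L \<nu> * fourier_char \<nu> p) - fourier_char \<nu> p) has_integral
      (\<Sum>x\<in>{..<L}\<times>{..<L}. (B $$ (fst x, snd x) / of_nat L) * r (int (snd x) - int (fst x) + p)) -
      (if p = 0 then 1 else 0)) {0..1}"
    unfolding aform_mult_fourier_char
    by (intro has_integral_diff has_integral_mult_trig_sum[OF assms] has_integral_fourier_char) simp
  moreover have "(\<lambda>\<nu>. \<phi> \<nu> * (aform B L \<nu> * fourier_char \<nu> p) - fourier_char \<nu> p) =
      (\<lambda>\<nu>. (\<phi> \<nu> * aform B L \<nu> - 1) * fourier_char \<nu> p)"
    by (simp add: algebra_simps)
  ultimately show "((\<lambda>\<nu>. (\<phi> \<nu> * aform B L \<nu> - 1) * fourier_char \<nu> p) has_integral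
      (\<Sum>x\<in>{..<L}\<times>{..<L}. (B $$ (fst x, snd x) / of_nat L) * r (int (snd x) - int (fst x) + p)) -
      (if p = 0 then 1 else 0)) {0..1}"
    by simp
qed

lemma norm_fourier_eps_le:
  assumes coercive: "coercive_symbol (cov S m) \<gamma>0 C c" and L: "1 \<le> L"
  shows "cmod (fourier_series (cov S m) \<nu> * aform (mat_inv (toep S m L)) L \<nu> - 1)
           \<le> (C + C * C / c) / c * real L powr (- min \<gamma>0 1)"
proof -
  define Ri where "Ri = mat_inv (toep S m L)"
  have Ri: "Ri \<in> carrier_mat L L" and right: "toep S m L * Ri = 1\<^sub>m L" and left: "Ri * toep S m L = 1\<^sub>m L"
    using toep_mat_inv[OF coercive] unfolding Ri_def by auto
  have "(\<Sum>j<L. cov S m (int i - int j) * Ri $$ (j, k)) = (toep S m L * Ri) $$ (i, k)"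
    if "i < L" "k < L" for i k
    using times_mat_eq_sum[OF toep_carrier Ri that] that by (simp add: toep_index)
  then have right_inv: "(\<Sum>j<L. cov S m (int i - int j) * Ri $$ (j, k)) = (if i = k then 1 else 0)"
    if "i < L" "k < L" for i k
    using right that by simp
  have "(\<Sum>j<L. Ri $$ (i, j) * cov S m (int j - int k)) = (Ri * toep S m L) $$ (i, k)"
    if "i < L" "k < L" for i k
    using times_mat_eq_sum[OF Ri toep_carrier that] that by (simp add: toep_index)
  then have left_inv: "(\<Sum>j<L. Ri $$ (i, j) * cov S m (int j - int k)) = (if i = k then 1 else 0)"
    if "i < L" "k < L" for i k
    using left that by simp
  show ?thesis
    unfolding Ri_def[symmetric] aform_def
    by (rule coercive_symbol.norm_symbol_inverse_form_le[OF coercive L, where Ri = "\<lambda>i j. Ri $$ (i, j)"])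
       (simp_all add: right_inv left_inv)
qed

definition EN_symbol :: "(nat \<Rightarrow> real \<Rightarrow> real) \<Rightarrow> nat \<Rightarrow> nat \<Rightarrow> real \<Rightarrow> complex" where
  "EN_symbol S M L \<nu> =
     (1 / of_nat M) * (\<Sum>m=1..M. fourier_series (cov S m) \<nu> * aform (mat_inv (toep S m L)) L \<nu> - 1)"

lemma continuous_on_EN_symbol:
  assumes "\<And>m. 1 \<le> m \<Longrightarrow> (\<lambda>l. cmod (cov S m l)) summable_on UNIV"
  shows "continuous_on {0..1} (EN_symbol S M L)"
  unfolding EN_symbol_def using assms by (intro continuous_intros continuous_on_fourier_series) auto

lemma norm_EN_symbol_le:
  assumes "\<And>m. 1 \<le> m \<Longrightarrow> coercive_symbol (cov S m) \<gamma>0 C c" and "1 \<le> L" and "1 \<le> M"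
  shows "cmod (EN_symbol S M L \<nu>) \<le> (C + C * C / c) / c * real L powr (- min \<gamma>0 1)"
proof -
  let ?K = "(C + C * C / c) / c * real L powr (- min \<gamma>0 1)"
  have "cmod (EN_symbol S M L \<nu>) \<le>
      (1 / real M) * (\<Sum>m=1..M. cmod (fourier_series (cov S m) \<nu> * aform (mat_inv (toep S m L)) L \<nu> - 1))"
    unfolding EN_symbol_def by (simp add: norm_mult norm_divide norm_sum divide_right_mono)
  also have "\<dots> \<le> (1 / real M) * (\<Sum>m=1..M. ?K)"
    using assms by (intro mult_left_mono sum_mono norm_fourier_eps_le) auto
  also have "\<dots> = ?K" using \<open>1 \<le> M\<close> by simp
  finally show ?thesis .
qed

lemma EN_index_eq_symbol:
  assumes S_int: "\<And>m. 1 \<le> m \<Longrightarrow> S m integrable_on {0..1}"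
    and S_nonneg: "\<And>m \<nu>. 1 \<le> m \<Longrightarrow> \<nu> \<in> {0..1} \<Longrightarrow> 0 \<le> S m \<nu>"
    and cov_summable: "\<And>m. 1 \<le> m \<Longrightarrow> (\<lambda>l. cmod (cov S m l)) summable_on UNIV"
    and inv: "\<And>m. 1 \<le> m \<Longrightarrow> mat_inv (toep S m L) \<in> carrier_mat L L"
    and "j < N" "k < N"
  shows "EN S M L N $$ (j, k) = integral {0..1} (\<lambda>\<nu>. EN_symbol S M L \<nu> * fourier_char \<nu> (int j - int k))"
proof -
  define X where "X m p = (\<Sum>x\<in>{..<L}\<times>{..<L}. (mat_inv (toep S m L) $$ (fst x, snd x) / of_nat L) *
      cov S m (int (snd x) - int (fst x) + p)) - (if p = 0 then 1 else 0)" for m p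
  let ?avg = "\<lambda>\<phi> \<nu>. (1 / of_nat M) * (\<Sum>m=1..M. \<phi> m \<nu> * aform (mat_inv (toep S m L)) L \<nu> - 1)"
  have coeffs_S: "has_fourier_coeffs (?avg (\<lambda>m \<nu>. of_real (S m \<nu>))) (\<lambda>p. (1 / of_nat M) * (\<Sum>m=1..M. X m p))"
    unfolding X_def using S_int S_nonneg
    by (intro has_fourier_coeffs_cmult has_fourier_coeffs_sum has_fourier_coeffs_aform has_fourier_coeffs_cov)
       auto
  have coeffs_symbol: "has_fourier_coeffs (EN_symbol S M L) (\<lambda>p. (1 / of_nat M) * (\<Sum>m=1..M. X m p))"
    unfolding X_def EN_symbol_def using cov_summable
    by (intro has_fourier_coeffs_cmult has_fourier_coeffs_sum has_fourier_coeffs_aform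
        has_fourier_coeffs_fourier_series) auto
  have integrand_eq: "((1 / of_nat M) * (\<Sum>m=1..M. epsML S m L \<nu>)) * (dvec N \<nu> $ j) * cnj (dvec N \<nu> $ k) =
      ?avg (\<lambda>m \<nu>. of_real (S m \<nu>)) \<nu> * fourier_char \<nu> (int j - int k)" for \<nu>
    using \<open>j < N\<close> \<open>k < N\<close> inv
    by (simp add: dvec_index cnj_fourier_char fourier_char_mult epsML_eq_aform)
  have "EN S M L N $$ (j, k) = integral {0..1} (\<lambda>\<nu>.
      ((1 / of_nat M) * (\<Sum>m=1..M. epsML S m L \<nu>)) * (dvec N \<nu> $ j) * cnj (dvec N \<nu> $ k))"
    unfolding EN_def using \<open>j < N\<close> \<open>k < N\<close> by simp
  also have "\<dots> = integral {0..1} (\<lambda>\<nu>. ?avg (\<lambda>m \<nu>. of_real (S m \<nu>)) \<nu> * fourier_char \<nu> (int j - int k))"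
    by (simp only: integrand_eq)
  also have "\<dots> = (1 / of_nat M) * (\<Sum>m=1..M. X m (int j - int k))"
    using coeffs_S unfolding has_fourier_coeffs_def by (blast intro: integral_unique)
  also have "\<dots> = integral {0..1} (\<lambda>\<nu>. EN_symbol S M L \<nu> * fourier_char \<nu> (int j - int k))"
    using coeffs_symbol unfolding has_fourier_coeffs_def by (blast intro: integral_unique[symmetric])
  finally show ?thesis .
qed

lemma op_norm_EN_le:
  assumes coercive: "\<And>m. 1 \<le> m \<Longrightarrow> coercive_symbol (cov S m) \<gamma>0 C c"
    and S_int: "\<And>m. 1 \<le> m \<Longrightarrow> S m integrable_on {0..1}"
    and S_nonneg: "\<And>m \<nu>. 1 \<le> m \<Longrightarrow> \<nu> \<in> {0..1} \<Longrightarrow> 0 \<le> S m \<nu>"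
    and "1 \<le> L" "1 \<le> M"
  shows "op_norm (EN S M L N) \<le> (C + C * C / c) / c * real L powr (- min \<gamma>0 1)"
proof (rule op_norm_toeplitz_le)
  have cov_summable: "(\<lambda>l. cmod (cov S m l)) summable_on UNIV" if "1 \<le> m" for m
    by (rule weighted_summable.abs_summable[OF coercive_symbol.axioms(1)[OF coercive[OF that]]])
  then show "continuous_on {0..1} (EN_symbol S M L)"
    by (rule continuous_on_EN_symbol)
  show "EN S M L N $$ (j, k) = integral {0..1} (\<lambda>\<nu>. EN_symbol S M L \<nu> * fourier_char \<nu> (int j - int k))"
    if "j < N" "k < N" for j k
    using toep_mat_inv[OF coercive] that
    by (intro EN_index_eq_symbol S_int S_nonneg cov_summable) auto
qed (use norm_EN_symbol_le[OF coercive \<open>1 \<le> L\<close> \<open>1 \<le> M\<close>] in \<open>auto simp: EN_def\<close>)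

lemma mult_powr_neg_min_le:
  assumes "0 \<le> K" "1 \<le> L" "\<gamma> \<le> min \<gamma>0 1"
  shows "K * real L powr (- min \<gamma>0 1) \<le> K / real L powr \<gamma>"
proof -
  have "K * real L powr (- min \<gamma>0 1) \<le> K * real L powr (- \<gamma>)"
    using assms by (intro mult_left_mono powr_mono) auto
  then show ?thesis by (simp add: powr_minus_divide)
qed

theorem corollary5p4:
  fixes S :: "nat \<Rightarrow> real \<Rightarrow> real" and \<gamma>0 :: real
  assumes density: "\<forall>m\<ge>1. S m integrable_on {0..1}"
    and A3_upper: "\<exists>C. \<forall>m\<ge>1. \<forall>\<nu>\<in>{0..1}. S m \<nu> \<le> C"
    and A3_lower: "\<exists>c>0. \<forall>m\<ge>1. \<forall>\<nu>\<in>{0..1}. c \<le> S m \<nu>"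
    and A5_pos: "\<gamma>0 > 0"
    and A5: "\<exists>C. \<forall>m\<ge>1.
               (\<lambda>n::int. (1 + \<bar>real_of_int n\<bar>) powr \<gamma>0 * cmod (cov S m n)) summable_on UNIV \<and>
               (\<Sum>\<^sub>\<infinity>n::int. (1 + \<bar>real_of_int n\<bar>) powr \<gamma>0 * cmod (cov S m n)) \<le> C"
  shows "(\<gamma>0 \<le> 1 \<longrightarrow>
            (\<forall>\<gamma><\<gamma>0. \<exists>\<kappa>::real. \<forall>L M N::nat. L \<ge> 1 \<and> M \<ge> 1 \<and> N \<ge> 1 \<longrightarrow>
                op_norm (EN S M L N) \<le> \<kappa> / real L powr \<gamma>)) \<and>
         (\<gamma>0 > 1 \<longrightarrow>
            (\<exists>\<kappa>::real. \<forall>L M N::nat. L \<ge> 1 \<and> M \<ge> 1 \<and> N \<ge> 1 \<longrightarrow>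
                op_norm (EN S M L N) \<le> \<kappa> / real L))"
proof -
  obtain C where weighted: "\<And>m. 1 \<le> m \<Longrightarrow> weighted_summable (cov S m) \<gamma>0 C"
    using A5 A5_pos unfolding weighted_summable_def by blast
  obtain c where "0 < c" and S_ge: "\<And>m \<nu>. 1 \<le> m \<Longrightarrow> \<nu> \<in> {0..1} \<Longrightarrow> c \<le> S m \<nu>"
    using A3_lower by blast
  have coercive: "coercive_symbol (cov S m) \<gamma>0 C c" if "1 \<le> m" for m
    using that density S_ge \<open>0 < c\<close> by (intro coercive_symbol_cov weighted) auto
  have S_nonneg: "0 \<le> S m \<nu>" if "1 \<le> m" "\<nu> \<in> {0..1}" for m \<nu>
    using S_ge[OF that] \<open>0 < c\<close> by linarith
  define K where "K = (C + C * C / c) / c"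
  have "0 \<le> K"
    using weighted_summable.bound_nonneg[OF weighted[of 1]] \<open>0 < c\<close> by (simp add: K_def)
  have rate: "op_norm (EN S M L N) \<le> K / real L powr \<gamma>"
    if "1 \<le> L" "1 \<le> M" "\<gamma> \<le> min \<gamma>0 1" for L M N \<gamma>
    using op_norm_EN_le[OF coercive density[rule_format] S_nonneg that(1,2)]
      mult_powr_neg_min_le[OF \<open>0 \<le> K\<close> that(1,3)]
    unfolding K_def by (rule order_trans)
  show ?thesis
    using rate[where \<gamma> = 1] by (auto intro!: exI[of _ K] rate)
qed

end
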